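(* For every prime $p$, the polynomial $P_{2,p}(z)=\sum_{n=0}^{p-1}\left(\frac{-1}{2n-1}\binom{2n}{n}^2\bmod p\right)z^n\in\mathbb{F}_p[z]$ is separable over $\overline{\mathbb{F}_p}$; in particular $P_{2,p}$ and its derivative $P_{2,p}'$ have no common root.
   Context: The coefficients $\frac{-1}{2n-1}\binom{2n}{n}^2$ are integers, so their reduction mod $p$ makes sense. *)

theory Defs
  imports "Berlekamp_Zassenhaus.Finite_Field" "HOL-Computational_Algebra.Polynomial"
begin

text \<open>The integer coefficient  -1/(2n-1) * binom(2n,n)^2  (the division is exact).\<close>
definition P2_coeff :: "nat \<Rightarrow> int" where
  "P2_coeff n = - ((int ((2*n) choose n))^2 div (2 * int n - 1))"

definition P2 :: "'p::prime_card mod_ring poly" where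
  "P2 = (\<Sum>n<CARD('p). monom (of_int (P2_coeff n)) n)"

text \<open>Separable: coprime to its formal derivative (equivalently, no repeated root /
  no common root with the derivative over the algebraic closure).\<close>
definition separable_poly :: "'a::field poly \<Rightarrow> bool" where
  "separable_poly f \<longleftrightarrow> coprime f (pderiv f)"

end

theory Submission
  imports Defs
begin

text \<open>
  The coefficients \<open>c\<^sub>n\<close> of \<open>P\<^sub>2\<^sub>,\<^sub>p\<close> satisfy \<open>(n+1)\<^sup>2 c\<^sub>n\<^sub>+\<^sub>1 = (16n\<^sup>2 - 4) c\<^sub>n\<close>; this survives
  the truncation at degree \<open>p - 1\<close> because \<open>p\<^sup>2 = 0\<close> in \<open>\<bbbF>\<^sub>p\<close>, so \<open>P = P\<^sub>2\<^sub>,\<^sub>p\<close> solves the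
  hypergeometric equation \<open>z(1 - 16z) P'' + (1 - 16z) P' + 4P = 0\<close>. If an irreducible \<open>q\<close>
  divided \<open>P\<close> to a power \<open>k \<ge> 2\<close>, then, as \<open>k\<close> and \<open>deg q\<close> are below \<open>p\<close>, it would divide
  \<open>P'\<close> and \<open>P''\<close> exactly to the powers \<open>k - 1\<close> and \<open>k - 2\<close>. Since \<open>P(0) = 1\<close>, \<open>q\<close> is prime to
  \<open>z\<close>, and comparing \<open>q\<close>-adic valuations in the equation forces \<open>q\<^sup>2\<close> to divide the
  linear polynomial \<open>1 - 16z\<close>, which is absurd.
\<close>

lemma Suc_times_central_binomial_Suc:
  "Suc n * ((2 * Suc n) choose Suc n) = 2 * (2 * n + 1) * ((2 * n) choose n)"
proof -
  have a: "Suc n * (Suc (Suc (2*n)) choose Suc n) = Suc (Suc (2*n)) * (Suc (2*n) choose n)"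
    using Suc_times_binomial_eq[of "Suc (2*n)" n] by simp
  have "Suc (2*n) choose n = Suc (2*n) choose Suc n"
    using binomial_symmetric[of n "Suc (2*n)"] by simp
  then have b: "Suc n * (Suc (2*n) choose n) = Suc (2*n) * ((2*n) choose n)"
    using Suc_times_binomial_eq[of "2*n" n] by simp
  have "Suc n * (Suc n * ((2 * Suc n) choose Suc n)) = Suc n * (2 * (2*n+1) * ((2*n) choose n))"
    unfolding mult_Suc_right using a b by (simp add: algebra_simps)
  then show ?thesis
    by (simp only: mult_left_cancel)
qed

lemma two_mult_minus_one_dvd_central_binomial:
  "2 * int n - 1 dvd int ((2 * n) choose n)"
proof (cases n)
  case (Suc m)
  have "int n * int ((2 * n) choose n) = (2 * int n - 1) * (2 * int ((2 * m) choose m))"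
    using arg_cong[OF Suc_times_central_binomial_Suc[of m], of int] Suc
    by (simp del: binomial_Suc_Suc add: algebra_simps)
  moreover have "coprime (2 * int n - 1) (int n)"
  proof (rule coprimeI)
    fix d
    assume d: "d dvd 2 * int n - 1" "d dvd int n"
    have "d dvd 2 * int n - (2 * int n - 1)"
      using dvd_diff[OF dvd_mult[OF d(2)] d(1)] .
    then show "is_unit d"
      by simp
  qed
  ultimately show ?thesis
    by (metis coprime_dvd_mult_right_iff dvd_triv_left)
qed simp

lemma P2_coeff_mult:
  "P2_coeff n * (2 * int n - 1) = - (int ((2 * n) choose n))\<^sup>2"
  using two_mult_minus_one_dvd_central_binomial[of n]
  by (simp add: P2_coeff_def power2_eq_square)

lemma P2_coeff_Suc:
  "(int n + 1)\<^sup>2 * P2_coeff (Suc n) = (16 * (int n)\<^sup>2 - 4) * P2_coeff n"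
proof -
  define c c' where "c = int ((2 * n) choose n)" and "c' = int ((2 * Suc n) choose Suc n)"
  have rec: "(int n + 1) * c' = 2 * (2 * int n + 1) * c"
    using arg_cong[OF Suc_times_central_binomial_Suc[of n], of int]
    unfolding c_def c'_def by (simp add: algebra_simps)
  have c': "P2_coeff (Suc n) * (2 * int n + 1) = - c'\<^sup>2"
    using P2_coeff_mult[of "Suc n"] unfolding c'_def by (simp add: algebra_simps)
  have c: "P2_coeff n * (2 * int n - 1) = - c\<^sup>2"
    using P2_coeff_mult[of n] unfolding c_def .
  have "(2 * int n + 1) * ((int n + 1)\<^sup>2 * P2_coeff (Suc n))
      = (int n + 1)\<^sup>2 * (P2_coeff (Suc n) * (2 * int n + 1))"
    by (simp add: algebra_simps)
  also have "\<dots> = - ((int n + 1) * c')\<^sup>2"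
    unfolding c' by (simp add: power_mult_distrib)
  also have "\<dots> = 4 * (2 * int n + 1)\<^sup>2 * - c\<^sup>2"
    unfolding rec by (simp add: algebra_simps power2_eq_square)
  also have "\<dots> = (2 * int n + 1) * ((16 * (int n)\<^sup>2 - 4) * P2_coeff n)"
    unfolding c[symmetric] by (simp add: algebra_simps power2_eq_square)
  finally show ?thesis
    by (simp add: add_eq_0_iff2)
qed

lemma ode_of_coeff_recurrence:
  fixes f :: "'a::idom poly" and a b :: 'a
  assumes "\<And>n. (of_nat (Suc n))\<^sup>2 * coeff f (Suc n) = (a * of_nat n ^ 2 - b) * coeff f n"
  shows "[:0, 1:] * [:1, -a:] * pderiv (pderiv f) + [:1, -a:] * pderiv f + smult b f = 0"
proof (rule poly_eqI)
  fix n
  show "coeff ([:0, 1:] * [:1, -a:] * pderiv (pderiv f) + [:1, -a:] * pderiv f + smult b f) n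
    = coeff 0 n"
    using assms[of n] by (cases n) (auto simp: coeff_pderiv coeff_pCons algebra_simps power2_eq_square split: nat.split)
qed

lemma coeff_P2:
  "coeff (P2 :: 'p::prime_card mod_ring poly) n = (if n < CARD('p) then of_int (P2_coeff n) else 0)"
  unfolding P2_def coeff_sum by (simp add: if_distrib cong: if_cong)

lemma coeff_P2_Suc:
  "(of_nat (Suc n))\<^sup>2 * coeff (P2 :: 'p::prime_card mod_ring poly) (Suc n)
    = (16 * of_nat n ^ 2 - 4) * coeff (P2 :: 'p mod_ring poly) n"
proof -
  have rec: "(of_nat (Suc n))\<^sup>2 * of_int (P2_coeff (Suc n))
    = (16 * of_nat n ^ 2 - 4) * (of_int (P2_coeff n) :: 'p mod_ring)"
    using arg_cong[OF P2_coeff_Suc[of n], of "of_int :: int \<Rightarrow> 'p mod_ring"]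
    by (simp add: add.commute)
  consider "Suc n < CARD('p)" | "Suc n = CARD('p)" | "CARD('p) < Suc n"
    by linarith
  then show ?thesis
  proof cases
    case 2
    then have "(16 * of_nat n ^ 2 - 4) * (of_int (P2_coeff n) :: 'p mod_ring) = 0"
      using rec by (metis of_nat_card_eq_0 zero_power2 mult_zero_left)
    with 2 show ?thesis
      by (simp add: coeff_P2)
  qed (use rec in \<open>simp_all add: coeff_P2\<close>)
qed

lemma poly_P2_0: "poly (P2 :: 'p::prime_card mod_ring poly) 0 = 1"
  by (simp add: poly_0_coeff_0 coeff_P2 P2_coeff_def)

lemma degree_P2_less: "degree (P2 :: 'p::prime_card mod_ring poly) < CARD('p)"
proof -
  have "1 < CARD('p)"
    using prime_card[where 'a='p] prime_gt_1_nat by blast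
  moreover from this have "degree (P2 :: 'p mod_ring poly) \<le> CARD('p) - 1"
    by (intro degree_le) (auto simp: coeff_P2)
  ultimately show ?thesis
    by linarith
qed

lemma of_nat_neq_0_below_CHAR:
  assumes "0 < n" "CHAR('a) = 0 \<or> n < CHAR('a)"
  shows "of_nat n \<noteq> (0 :: 'a :: semiring_1)"
  using assms by (auto simp: of_nat_eq_0_iff_char_dvd dest: dvd_imp_le)

lemma not_dvd_pderiv_self:
  fixes q :: "'a::field poly"
  assumes "0 < degree q" "of_nat (degree q) \<noteq> (0 :: 'a)"
  shows "\<not> q dvd pderiv q"
proof
  assume dvd: "q dvd pderiv q"
  have "coeff (pderiv q) (degree q - 1) = of_nat (degree q) * lead_coeff q"
    using assms(1) by (simp add: coeff_pderiv)
  then have "pderiv q \<noteq> 0"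
    using assms by auto
  with dvd have "degree q \<le> degree (pderiv q)"
    by (rule dvd_imp_degree_le)
  moreover have "degree (pderiv q) \<le> degree q - 1"
    by (rule degree_le) (auto simp: coeff_pderiv coeff_eq_0)
  ultimately show False
    using assms(1) by linarith
qed

lemma pderiv_prime_power_mult:
  fixes q h :: "'a::field poly"
  assumes q: "prime_elem q" and qh: "\<not> q dvd h"
    and j: "of_nat (Suc j) \<noteq> (0 :: 'a)" and q': "\<not> q dvd pderiv q"
  obtains g where "pderiv (q ^ Suc j * h) = q ^ j * g" "\<not> q dvd g"
proof
  define g where "g = smult (of_nat (Suc j)) (pderiv q) * h + q * pderiv h"
  show "pderiv (q ^ Suc j * h) = q ^ j * g"
    unfolding g_def pderiv_mult pderiv_power_Suc by (simp add: mult_ac distrib_left)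
  show "\<not> q dvd g"
  proof
    assume "q dvd g"
    then have "q dvd smult (of_nat (Suc j)) (pderiv q) * h"
      by (simp add: g_def dvd_add_left_iff)
    then have "q dvd smult (of_nat (Suc j)) (pderiv q)"
      using q qh prime_elem_dvd_mult_iff by blast
    with j q' show False
      by (simp add: dvd_smult_cancel)
  qed
qed

lemma prime_square_dvd_of_eq:
  fixes q a b g u v :: "'a::idom"
  assumes q: "prime_elem q" and qa: "\<not> q dvd a" and qg: "\<not> q dvd g"
    and eq: "a * b * g + b * q * u + q\<^sup>2 * v = 0"
  shows "q\<^sup>2 dvd b"
proof -
  have "a * b * g = - (q * (b * u + q * v))"
    using eq by (simp add: algebra_simps power2_eq_square eq_neg_iff_add_eq_0)
  then have "q dvd a * b * g" by simp
  with q qa qg obtain c where c: "b = q * c"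
    by (auto simp: prime_elem_dvd_mult_iff elim: dvdE)
  have "q * (a * c * g + q * (c * u + v)) = 0"
    using eq unfolding c by (simp add: algebra_simps power2_eq_square)
  moreover have "q \<noteq> 0"
    using q by auto
  ultimately have "a * c * g = - (q * (c * u + v))"
    by (simp add: eq_neg_iff_add_eq_0)
  then have "q dvd a * c * g" by simp
  with q qa qg have "q dvd c"
    by (simp add: prime_elem_dvd_mult_iff)
  then show ?thesis
    by (simp add: c power2_eq_square)
qed

lemma exact_prime_power_factor:
  fixes f q :: "'a::field_gcd poly"
  assumes q: "prime_elem q" and qf: "q dvd f" and f: "f \<noteq> 0"
  obtains j h where "f = q ^ Suc j * h" "\<not> q dvd h" "Suc j \<le> degree f"
proof -
  have q0: "q \<noteq> 0" and dq: "0 < degree q"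
    using q by (auto simp: prime_elem_def is_unit_iff_degree)
  obtain h where fk: "f = q ^ multiplicity q f * h" and qh: "\<not> q dvd h"
    using f prime_elem_not_unit[OF q] by (rule multiplicity_decompose')
  have "degree q * multiplicity q f \<le> degree f"
    using fk f by (metis dvd_imp_degree_le dvd_triv_left degree_power_eq[OF q0])
  moreover have "multiplicity q f \<le> degree q * multiplicity q f"
    using dq by simp
  ultimately have "multiplicity q f \<le> degree f"
    by linarith
  moreover have "multiplicity q f \<noteq> 0"
    using fk qf qh by (metis mult_1 power_0)
  ultimately obtain j where k: "multiplicity q f = Suc j" and j: "Suc j \<le> degree f"
    by (cases "multiplicity q f") auto
  have "f = q ^ Suc j * h"
    using fk unfolding k .
  with qh j show ?thesis
    by (intro that)
qed

lemma coprime_pderiv_of_ode: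
  fixes f A B C :: "'a::field_gcd poly"
  assumes ode: "A * B * pderiv (pderiv f) + B * pderiv f + C * f = 0"
    and f: "f \<noteq> 0" and Af: "coprime A f" and B: "B \<noteq> 0" "degree B \<le> 1"
    and char: "CHAR('a) = 0 \<or> degree f < CHAR('a)"
  shows "coprime f (pderiv f)"
proof (rule ccontr)
  assume "\<not> coprime f (pderiv f)"
  then obtain d where "d dvd f" "d dvd pderiv f" "\<not> is_unit d"
    by (rule not_coprimeE)
  moreover from \<open>d dvd f\<close> f have "d \<noteq> 0"
    by auto
  ultimately obtain q where q: "prime_elem q" and qf: "q dvd f" and qf': "q dvd pderiv f"
    by (metis dvd_trans prime_divisor_exists prime_def)
  have q0: "q \<noteq> 0" and dq: "0 < degree q"
    using q by (auto simp: prime_elem_def is_unit_iff_degree)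
  have nonzero_below_degree: "of_nat n \<noteq> (0 :: 'a)" if "0 < n" "n \<le> degree f" for n
    using of_nat_neq_0_below_CHAR[of n] that char by auto
  have qA: "\<not> q dvd A"
    using Af qf q by (meson coprime_common_divisor prime_elem_not_unit)
  have q': "\<not> q dvd pderiv q"
    using dq nonzero_below_degree[OF dq dvd_imp_degree_le[OF qf f]] by (rule not_dvd_pderiv_self)
  obtain j h where fj: "f = q ^ Suc j * h" and qh: "\<not> q dvd h" and j: "Suc j \<le> degree f"
    using q qf f by (rule exact_prime_power_factor)
  obtain g1 where g1: "pderiv f = q ^ j * g1" and qg1: "\<not> q dvd g1"
    using pderiv_prime_power_mult[OF q qh nonzero_below_degree[OF zero_less_Suc j] q']
    unfolding fj[symmetric] .
  obtain i where ji: "j = Suc i"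
    using qf' qg1 g1 by (cases j) auto
  have f'i: "pderiv f = q ^ Suc i * g1"
    using g1 ji by simp
  have i: "Suc i \<le> degree f"
    using j ji by simp
  obtain g2 where g2: "pderiv (pderiv f) = q ^ i * g2" and qg2: "\<not> q dvd g2"
    using pderiv_prime_power_mult[OF q qg1 nonzero_below_degree[OF zero_less_Suc i] q']
    unfolding f'i[symmetric] .
  have "q ^ i * (A * B * g2 + B * q * g1 + q\<^sup>2 * (C * h)) = 0"
    using ode unfolding g2 unfolding f'i unfolding fj ji by (simp add: algebra_simps power2_eq_square)
  then have "q\<^sup>2 dvd B"
    using q0 by (intro prime_square_dvd_of_eq[OF q qA qg2]) simp
  then have "degree (q\<^sup>2) \<le> degree B"
    using B(1) by (rule dvd_imp_degree_le)
  then show False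
    using dq B(2) by (simp add: degree_power_eq[OF q0])
qed

theorem mainTheorem15:
  shows "separable_poly (P2 :: 'p::prime_card mod_ring poly)"
proof -
  let ?P = "P2 :: 'p mod_ring poly"
  have "[:4:] * ?P = smult 4 ?P"
    by simp
  then have ode: "[:0, 1:] * [:1, -16:] * pderiv (pderiv ?P) + [:1, -16:] * pderiv ?P + [:4:] * ?P = 0"
    by (simp only: ode_of_coeff_recurrence coeff_P2_Suc)
  have P0: "poly ?P 0 = 1"
    by (rule poly_P2_0)
  then have "coprime [:0, 1:] ?P"
    by (simp add: prime_elem_imp_coprime prime_elem_linear_field_poly dvd_iff_poly_eq_0)
  moreover have "?P \<noteq> 0"
    using P0 by auto
  ultimately show ?thesis
    unfolding separable_poly_def
    by (intro coprime_pderiv_of_ode[OF ode]) (auto intro: order_trans[OF degree_pCons_le] simp: degree_P2_less)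
qed

end
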